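(* A $po$-$\Gamma$-semigroup $M$ is left regular if and only if for every fuzzy subset $f$ of $M$ we have $f\preceq 1\circ (f\circ f)$.
   Context: Let $M$ and $\Gamma$ be nonempty sets with a map $M\times\Gamma\times M\to M$, $(a,\gamma,b)\mapsto a\gamma b$, satisfying $(a\gamma b)\mu c=a\gamma(b\mu c)$ for all $a,b,c\in M$, $\gamma,\mu\in\Gamma$. A $po$-$\Gamma$-semigroup is such an $M$ with a partial order $\le$ such that $a\le b$ implies $a\gamma c\le b\gamma c$ and $c\gamma a\le c\gamma b$ for all $c\in M$, $\gamma\in\Gamma$. For $H\subseteq M$, $(H]=\{t\in M: t\le h \text{ for some } h\in H\}$; $M\Gamma a\Gamma a=\{x\gamma a\mu a: x\in M,\gamma,\mu\in\Gamma\}$. $M$ is left regular if $a\in(M\Gamma a\Gamma a]$ for every $a\in M$. A fuzzy subset of $M$ is a map $M\to[0,1]$; $1$ is the constant fuzzy subset with value $1$. For $c\in M$ let $A_c=\{(y,z)\in M\times M: c\le y\gamma z \text{ for some }\gamma\in\Gamma\}$. $(f\circ g)(c)=\bigvee_{(y,z)\in A_c}\min\{f(y),g(z)\}$ if $A_c\ne\emptyset$, and $0$ otherwise. $f\preceq g$ means $f(c)\le g(c)$ for all $c\in M$. *)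

theory Defs
  imports Complex_Main
begin

text \<open>M and Gamma are modelled by the (nonempty) types 'm and 'g; the ternary
operation is mult a \<gamma> b, the order is le.\<close>

definition po_gamma_semigroup :: "('m \<Rightarrow> 'g \<Rightarrow> 'm \<Rightarrow> 'm) \<Rightarrow> ('m \<Rightarrow> 'm \<Rightarrow> bool) \<Rightarrow> bool" where
  "po_gamma_semigroup mult le \<longleftrightarrow>
     (\<forall>a b c \<gamma> \<mu>. mult (mult a \<gamma> b) \<mu> c = mult a \<gamma> (mult b \<mu> c)) \<and>
     (\<forall>a. le a a) \<and> (\<forall>a b. le a b \<and> le b a \<longrightarrow> a = b) \<and>
     (\<forall>a b c. le a b \<and> le b c \<longrightarrow> le a c) \<and>
     (\<forall>a b c \<gamma>. le a b \<longrightarrow> le (mult a \<gamma> c) (mult b \<gamma> c) \<and> le (mult c \<gamma> a) (mult c \<gamma> b))"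

definition down_closure :: "('m \<Rightarrow> 'm \<Rightarrow> bool) \<Rightarrow> 'm set \<Rightarrow> 'm set" where
  "down_closure le H = {t. \<exists>h\<in>H. le t h}"

definition left_regular :: "('m \<Rightarrow> 'g \<Rightarrow> 'm \<Rightarrow> 'm) \<Rightarrow> ('m \<Rightarrow> 'm \<Rightarrow> bool) \<Rightarrow> bool" where
  "left_regular mult le \<longleftrightarrow>
     (\<forall>a. a \<in> down_closure le {mult (mult x \<gamma> a) \<mu> a | x \<gamma> \<mu>. True})"

definition fuzzy_subset :: "('m \<Rightarrow> real) \<Rightarrow> bool" where
  "fuzzy_subset f \<longleftrightarrow> (\<forall>x. 0 \<le> f x \<and> f x \<le> 1)"

definition A_set :: "('m \<Rightarrow> 'g \<Rightarrow> 'm \<Rightarrow> 'm) \<Rightarrow> ('m \<Rightarrow> 'm \<Rightarrow> bool) \<Rightarrow> 'm \<Rightarrow> ('m \<times> 'm) set" where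
  "A_set mult le c = {(y, z). \<exists>\<gamma>. le c (mult y \<gamma> z)}"

definition fuzzy_comp :: "('m \<Rightarrow> 'g \<Rightarrow> 'm \<Rightarrow> 'm) \<Rightarrow> ('m \<Rightarrow> 'm \<Rightarrow> bool) \<Rightarrow>
    ('m \<Rightarrow> real) \<Rightarrow> ('m \<Rightarrow> real) \<Rightarrow> 'm \<Rightarrow> real" where
  "fuzzy_comp mult le f g c =
     (if A_set mult le c = {} then 0
      else Sup ((\<lambda>(y, z). min (f y) (g z)) ` A_set mult le c))"

definition fuzzy_le :: "('m \<Rightarrow> real) \<Rightarrow> ('m \<Rightarrow> real) \<Rightarrow> bool" where
  "fuzzy_le f g \<longleftrightarrow> (\<forall>c. f c \<le> g c)"

end

theory Submission
  imports Defs
begin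

text \<open>If M is left regular, every a lies below some x \<gamma> (a \<mu> a), so
  f a \<le> (f \<circ> f)(a \<mu> a) \<le> (1 \<circ> (f \<circ> f))(a). Conversely, applying the inequality to
  the characteristic function of {a} makes the right-hand side positive at a; unwinding
  the two suprema yields a \<le> y \<gamma> z and z \<le> a \<mu> a, hence a \<le> (y \<gamma> a) \<mu> a.\<close>

lemma fuzzy_comp_le_bound:
  assumes "\<And>x. f x \<le> B" and "0 \<le> B"
  shows "fuzzy_comp mult le f g c \<le> B"
proof (cases "A_set mult le c = {}")
  case False
  have "Sup ((\<lambda>(y, z). min (f y) (g z)) ` A_set mult le c) \<le> B"
    using False assms(1) by (intro cSup_least) (auto simp: min_le_iff_disj)
  then show ?thesis using False by (simp add: fuzzy_comp_def)
qed (simp add: fuzzy_comp_def assms(2))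

lemma fuzzy_comp_lower_bound:
  assumes "le c (mult y \<gamma> z)" and "\<And>x. f x \<le> B"
  shows "min (f y) (g z) \<le> fuzzy_comp mult le f g c"
proof -
  have yz: "(y, z) \<in> A_set mult le c" using assms(1) unfolding A_set_def by auto
  have "bdd_above ((\<lambda>(y, z). min (f y) (g z)) ` A_set mult le c)"
    using assms(2) by (intro bdd_aboveI[where M = B]) (auto simp: min_le_iff_disj)
  then have "min (f y) (g z) \<le> Sup ((\<lambda>(y, z). min (f y) (g z)) ` A_set mult le c)"
    using yz by (intro cSup_upper) (auto intro: rev_image_eqI)
  then show ?thesis using yz unfolding fuzzy_comp_def by auto
qed

lemma fuzzy_comp_pos_witness:
  assumes "0 < fuzzy_comp mult le f g c"
  obtains y \<gamma> z where "le c (mult y \<gamma> z)" and "0 < f y" and "0 < g z"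
proof -
  have ne: "A_set mult le c \<noteq> {}"
    using assms unfolding fuzzy_comp_def by (auto split: if_splits)
  have "\<exists>y z \<gamma>. le c (mult y \<gamma> z) \<and> 0 < min (f y) (g z)"
  proof (rule ccontr)
    assume "\<not> ?thesis"
    then have "min (f y) (g z) \<le> 0" if "le c (mult y \<gamma> z)" for y \<gamma> z
      using that by (meson not_less)
    then have "\<forall>v \<in> (\<lambda>(y, z). min (f y) (g z)) ` A_set mult le c. v \<le> 0"
      unfolding A_set_def by auto
    then have "Sup ((\<lambda>(y, z). min (f y) (g z)) ` A_set mult le c) \<le> 0"
      using ne by (intro cSup_least) auto
    then show False using assms ne unfolding fuzzy_comp_def by auto
  qed
  then show ?thesis using that by auto
qed

lemma left_regular_imp_fuzzy_le:
  assumes assoc: "\<And>a b c \<gamma> \<mu>. mult (mult a \<gamma> b) \<mu> c = mult a \<gamma> (mult b \<mu> c)"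
    and refl: "\<And>a. le a a"
    and "left_regular mult le" and "\<And>x. f x \<le> 1"
  shows "fuzzy_le f (fuzzy_comp mult le (\<lambda>_. 1) (fuzzy_comp mult le f f))"
  unfolding fuzzy_le_def
proof
  fix a
  obtain x \<gamma> \<mu> where "le a (mult (mult x \<gamma> a) \<mu> a)"
    using assms(3) unfolding left_regular_def down_closure_def by blast
  then have a_below: "le a (mult x \<gamma> (mult a \<mu> a))" by (simp add: assoc)
  have "f a \<le> fuzzy_comp mult le f f (mult a \<mu> a)"
    using refl fuzzy_comp_lower_bound[of le "mult a \<mu> a" mult a \<mu> a f 1 f] assms(4) by simp
  also have "\<dots> = min 1 (fuzzy_comp mult le f f (mult a \<mu> a))"
    using fuzzy_comp_le_bound[of f 1 mult le f "mult a \<mu> a"] assms(4) by simp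
  also have "\<dots> \<le> fuzzy_comp mult le (\<lambda>_. 1) (fuzzy_comp mult le f f) a"
    using a_below fuzzy_comp_lower_bound[of le a mult x \<gamma> "mult a \<mu> a" "\<lambda>_. 1" 1] by simp
  finally show "f a \<le> fuzzy_comp mult le (\<lambda>_. 1) (fuzzy_comp mult le f f) a" .
qed

lemma fuzzy_le_imp_left_regular:
  fixes mult :: "'m \<Rightarrow> 'g \<Rightarrow> 'm \<Rightarrow> 'm" and le :: "'m \<Rightarrow> 'm \<Rightarrow> bool"
  assumes assoc: "\<And>a b c \<gamma> \<mu>. mult (mult a \<gamma> b) \<mu> c = mult a \<gamma> (mult b \<mu> c)"
    and trans: "\<And>a b c. le a b \<Longrightarrow> le b c \<Longrightarrow> le a c"
    and mono_right: "\<And>a b c \<gamma>. le a b \<Longrightarrow> le (mult c \<gamma> a) (mult c \<gamma> b)"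
    and H: "\<And>f. fuzzy_subset f \<Longrightarrow>
              fuzzy_le f (fuzzy_comp mult le (\<lambda>_. 1) (fuzzy_comp mult le f f))"
  shows "left_regular mult le"
  unfolding left_regular_def down_closure_def
proof (intro allI CollectI)
  fix a :: 'm
  define f :: "_ \<Rightarrow> real" where "f t = (if t = a then 1 else 0)" for t
  have "fuzzy_subset f" unfolding fuzzy_subset_def f_def by auto
  with H have "f a \<le> fuzzy_comp mult le (\<lambda>_. 1) (fuzzy_comp mult le f f) a"
    unfolding fuzzy_le_def by blast
  then have "0 < fuzzy_comp mult le (\<lambda>_. 1) (fuzzy_comp mult le f f) a"
    by (simp add: f_def)
  then obtain y \<gamma> z where a_below: "le a (mult y \<gamma> z)"
    and "0 < fuzzy_comp mult le f f z"
    by (rule fuzzy_comp_pos_witness)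
  from this(2) obtain u \<mu> v where "le z (mult u \<mu> v)" and "0 < f u" and "0 < f v"
    by (rule fuzzy_comp_pos_witness)
  then have "le z (mult a \<mu> a)" by (simp add: f_def split: if_splits)
  then have "le a (mult (mult y \<gamma> a) \<mu> a)"
    using trans[OF a_below mono_right] by (simp add: assoc)
  then show "\<exists>h\<in>{mult (mult x \<gamma> a) \<mu> a |x \<gamma> \<mu>. True}. le a h" by blast
qed

theorem theorem28:
  fixes mult :: "'m \<Rightarrow> 'g \<Rightarrow> 'm \<Rightarrow> 'm" and le :: "'m \<Rightarrow> 'm \<Rightarrow> bool"
  assumes "po_gamma_semigroup mult le"
  shows "left_regular mult le \<longleftrightarrow>
    (\<forall>f. fuzzy_subset f \<longrightarrow>
       fuzzy_le f (fuzzy_comp mult le (\<lambda>_. 1) (fuzzy_comp mult le f f)))"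
proof -
  have assoc: "\<And>a b c \<gamma> \<mu>. mult (mult a \<gamma> b) \<mu> c = mult a \<gamma> (mult b \<mu> c)"
    and refl: "\<And>a. le a a"
    and trans: "\<And>a b c. le a b \<Longrightarrow> le b c \<Longrightarrow> le a c"
    and mono_right: "\<And>a b c \<gamma>. le a b \<Longrightarrow> le (mult c \<gamma> a) (mult c \<gamma> b)"
    using assms unfolding po_gamma_semigroup_def by meson+
  show ?thesis
  proof
    assume "left_regular mult le"
    then show "\<forall>f. fuzzy_subset f \<longrightarrow>
        fuzzy_le f (fuzzy_comp mult le (\<lambda>_. 1) (fuzzy_comp mult le f f))"
      using left_regular_imp_fuzzy_le[of mult le] assoc refl
      unfolding fuzzy_subset_def by blast
  next
    assume "\<forall>f. fuzzy_subset f \<longrightarrow>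
        fuzzy_le f (fuzzy_comp mult le (\<lambda>_. 1) (fuzzy_comp mult le f f))"
    then show "left_regular mult le"
      using fuzzy_le_imp_left_regular[of mult le] assoc trans mono_right by blast
  qed
qed

end
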